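(* Let $j\ge2$, let $H$ be a graph, and let $G\cong\mathsf{TS}_j(H)$. Write $q=\omega(G)$ and, for a graph $X$ and integer $t$, let $c_t(X)$ be the number of $t$-cliques of $X$. If $q\ge j+2$, then \[ c_q(G)=\binom{q+j-1}{j-1}\,c_{q+j-1}(H); \] in particular $\binom{q+j-1}{j-1}$ divides $c_q(G)$.
   Context: All graphs are finite, simple, undirected; $\omega(G)$ is the clique number. A $k$-clique of a graph $H$ is a set of $k$ pairwise adjacent vertices. For a graph $H$ and integer $k\ge1$, the Token Sliding graph $\mathsf{TS}_k(H)$ has as vertices the $k$-cliques of $H$, and two $k$-cliques $A,B$ are adjacent iff $A\setminus B=\{u\}$, $B\setminus A=\{v\}$ for some vertices $u,v$ with $uv\in E(H)$. *)

theory Defs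
  imports Main
begin

definition simple_graph :: "'a set \<Rightarrow> ('a \<Rightarrow> 'a \<Rightarrow> bool) \<Rightarrow> bool" where
  "simple_graph V E \<longleftrightarrow> finite V \<and> (\<forall>u v. E u v \<longrightarrow> u \<in> V \<and> v \<in> V)
     \<and> (\<forall>u v. E u v \<longrightarrow> E v u) \<and> (\<forall>u. \<not> E u u)"

definition is_clique :: "'a set \<Rightarrow> ('a \<Rightarrow> 'a \<Rightarrow> bool) \<Rightarrow> 'a set \<Rightarrow> bool" where
  "is_clique V E K \<longleftrightarrow> K \<subseteq> V \<and> (\<forall>u\<in>K. \<forall>v\<in>K. u \<noteq> v \<longrightarrow> E u v)"

definition cliques :: "'a set \<Rightarrow> ('a \<Rightarrow> 'a \<Rightarrow> bool) \<Rightarrow> nat \<Rightarrow> 'a set set" where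
  "cliques V E k = {K. is_clique V E K \<and> card K = k}"

text \<open>Clique number (the empty set is a clique, so the set is nonempty).\<close>
definition clique_number :: "'a set \<Rightarrow> ('a \<Rightarrow> 'a \<Rightarrow> bool) \<Rightarrow> nat" where
  "clique_number V E = Max {card K | K. is_clique V E K}"

definition TS_vertices :: "'a set \<Rightarrow> ('a \<Rightarrow> 'a \<Rightarrow> bool) \<Rightarrow> nat \<Rightarrow> 'a set set" where
  "TS_vertices V E k = cliques V E k"

definition TS_edge :: "'a set \<Rightarrow> ('a \<Rightarrow> 'a \<Rightarrow> bool) \<Rightarrow> nat \<Rightarrow> 'a set \<Rightarrow> 'a set \<Rightarrow> bool" where
  "TS_edge V E k A B \<longleftrightarrow> A \<in> cliques V E k \<and> B \<in> cliques V E k \<and>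
     (\<exists>u v. A - B = {u} \<and> B - A = {v} \<and> E u v)"

definition graph_iso :: "'a set \<Rightarrow> ('a \<Rightarrow> 'a \<Rightarrow> bool) \<Rightarrow> 'b set \<Rightarrow> ('b \<Rightarrow> 'b \<Rightarrow> bool) \<Rightarrow> bool" where
  "graph_iso V1 E1 V2 E2 \<longleftrightarrow> (\<exists>f. bij_betw f V1 V2 \<and>
     (\<forall>u\<in>V1. \<forall>v\<in>V1. E1 u v \<longleftrightarrow> E2 (f u) (f v)))"

end

theory Submission
  imports Defs
begin

(* A q-clique of TS_j(H) is a family of q j-cliques of H any two of which share j - 1 vertices,
   i.e. a clique of the Johnson graph. Such a clique either has a common (j - 1)-kernel or lies
   inside a (j + 1)-set; for q >= j + 2 the second case is impossible, so the family is a
   sunflower {S + x | x in X}, and S u X is then a (q + j - 1)-clique of H. Conversely every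
   (q + j - 1)-clique K of H with a (j - 1)-subset S yields such a family, from which K and S are
   recovered as its union and intersection. So the q-cliques of TS_j(H) correspond to the pairs
   (K, S), which gives the binomial factor. *)

definition sunflower :: "'a set \<Rightarrow> 'a set \<Rightarrow> 'a set set" where
  "sunflower S X = (\<lambda>x. insert x S) ` X"

definition johnson_clique :: "nat \<Rightarrow> 'a set set \<Rightarrow> bool" where
  "johnson_clique j F \<longleftrightarrow> (\<forall>A\<in>F. finite A \<and> card A = j)
     \<and> (\<forall>A\<in>F. \<forall>B\<in>F. A \<noteq> B \<longrightarrow> card (A \<inter> B) = j - 1)"

lemma card_sunflower:
  assumes "S \<inter> X = {}"
  shows "card (sunflower S X) = card X"
  unfolding sunflower_def
  by (rule card_image, rule inj_onI) (use assms in blast)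

lemma Inter_sunflower:
  assumes "x \<in> X" "y \<in> X" "x \<noteq> y"
  shows "\<Inter> (sunflower S X) = S"
  using assms unfolding sunflower_def by auto

lemma Union_sunflower:
  assumes "X \<noteq> {}"
  shows "\<Union> (sunflower S X) = S \<union> X"
  using assms unfolding sunflower_def by auto

lemma card_ge_2E:
  assumes "card X \<ge> 2"
  obtains x y where "x \<in> X" "y \<in> X" "x \<noteq> y"
  using assms by (metis card_le_Suc_iff numeral_2_eq_2 insertCI)

lemma Union_Inter_sunflower_Diff:
  assumes "S \<subseteq> K" "card (K - S) \<ge> 2"
  shows "\<Union> (sunflower S (K - S)) = K \<and> \<Inter> (sunflower S (K - S)) = S"
proof -
  obtain x y where "x \<in> K - S" "y \<in> K - S" "x \<noteq> y"
    using assms(2) by (rule card_ge_2E)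
  then show ?thesis
    using assms(1) Union_sunflower[of "K - S" S] Inter_sunflower[of x "K - S" y S] by auto
qed

lemma eq_sunflower_Union:
  assumes "\<forall>A\<in>F. S \<subseteq> A \<and> finite A \<and> card A = Suc (card S)"
  shows "F = sunflower S (\<Union>F - S)"
proof -
  have "\<exists>x. x \<notin> S \<and> A = insert x S" if "A \<in> F" for A
  proof -
    have "finite S" "S \<subseteq> A" "card A = Suc (card S)"
      using assms that finite_subset by blast+
    then have "card (A - S) = 1"
      by (simp add: card_Diff_subset)
    then obtain x where "A - S = {x}"
      by (auto simp: card_1_singleton_iff)
    then show ?thesis
      using \<open>S \<subseteq> A\<close> by blast
  qed
  then show ?thesis
    unfolding sunflower_def by blast
qed

lemma Diff_singleton_subset_if_card_Int:
  assumes "finite X" "card (C \<inter> X) = card X - 1" "s \<in> X" "s \<notin> C"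
  shows "X - {s} \<subseteq> C"
proof -
  have "C \<inter> X \<subseteq> X - {s}"
    using assms(4) by blast
  moreover have "card (C \<inter> X) = card (X - {s})"
    using assms(1-3) by simp
  ultimately have "C \<inter> X = X - {s}"
    using assms(1) by (simp add: card_subset_eq)
  then show ?thesis
    by blast
qed

lemma johnson_clique_card_Un:
  assumes "johnson_clique j F" "A \<in> F" "B \<in> F" "A \<noteq> B"
  shows "card (A \<union> B) = j + 1"
proof -
  have "finite A" "finite B" "card A = j" "card B = j" "card (A \<inter> B) = j - 1"
    using assms by (auto simp: johnson_clique_def)
  moreover have "j \<noteq> 0"
    using calculation assms(4) by auto
  ultimately show ?thesis
    using card_Un_Int[of A B] by simp
qed

lemma johnson_clique_avoiding_subset_Un:
  assumes F: "johnson_clique j F" and "A \<in> F" "B \<in> F" "C \<in> F" "A \<noteq> B"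
    and s: "s \<in> A \<inter> B" "s \<notin> C"
  shows "C \<subseteq> A \<union> B"
proof -
  have fin: "finite A" "finite B" "finite C" and card: "card A = j" "card B = j" "card C = j"
    using F assms(2-4) by (auto simp: johnson_clique_def)
  have "C \<noteq> A" "C \<noteq> B"
    using s by auto
  then have "card (C \<inter> A) = card A - 1" "card (C \<inter> B) = card B - 1"
    using F assms(2-4) card by (auto simp: johnson_clique_def)
  then have "A - {s} \<subseteq> C" "B - {s} \<subseteq> C"
    using Diff_singleton_subset_if_card_Int[OF fin(1)] Diff_singleton_subset_if_card_Int[OF fin(2)] s
    by auto
  then have "A \<union> B - {s} \<subseteq> C"
    by blast
  moreover have "card (A \<union> B - {s}) = card C"
    using johnson_clique_card_Un[OF F assms(2,3,5)] s card by simp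
  ultimately have "A \<union> B - {s} = C"
    using fin by (simp add: card_subset_eq)
  then show ?thesis
    by blast
qed

lemma johnson_clique_common_kernel:
  assumes F: "johnson_clique j F" and card_F: "card F \<ge> j + 2"
  shows "\<exists>S. finite S \<and> card S = j - 1 \<and> (\<forall>A\<in>F. S \<subseteq> A)"
proof -
  have card_A: "\<forall>A\<in>F. finite A \<and> card A = j"
    and near: "\<forall>A\<in>F. \<forall>B\<in>F. A \<noteq> B \<longrightarrow> card (A \<inter> B) = j - 1"
    using F by (auto simp: johnson_clique_def)
  have "card F \<ge> 2"
    using card_F by simp
  then obtain A B where A: "A \<in> F" and B: "B \<in> F" and "A \<noteq> B"
    by (rule card_ge_2E)
  define U where "U = A \<union> B"
  have "finite U" "finite (A \<inter> B)" and card_S: "card (A \<inter> B) = j - 1"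
    using A B \<open>A \<noteq> B\<close> card_A near by (auto simp: U_def)
  have "card U = j + 1"
    unfolding U_def using F A B \<open>A \<noteq> B\<close> by (rule johnson_clique_card_Un)
  then have "card {C. C \<subseteq> U \<and> card C = j} = j + 1"
    using n_subsets[OF \<open>finite U\<close>] by (simp add: binomial_Suc_n)
  then have "\<not> F \<subseteq> {C. C \<subseteq> U \<and> card C = j}"
    using card_mono[of "{C. C \<subseteq> U \<and> card C = j}" F] card_F \<open>finite U\<close> by fastforce
  then obtain D where D: "D \<in> F" "\<not> D \<subseteq> U"
    using card_A by blast
  have "A \<inter> B \<subseteq> C" if "C \<in> F" for C
  proof (rule ccontr)
    assume "\<not> A \<inter> B \<subseteq> C"
    then obtain s where s: "s \<in> A \<inter> B" "s \<notin> C"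
      by blast
    have "A \<inter> B \<subseteq> D"
      using johnson_clique_avoiding_subset_Un[OF F A B D(1) \<open>A \<noteq> B\<close>] D(2) by (auto simp: U_def)
    have "C \<subseteq> U" "C \<noteq> D"
      using johnson_clique_avoiding_subset_Un[OF F A B that \<open>A \<noteq> B\<close> s] D \<open>A \<inter> B \<subseteq> D\<close> s
      by (auto simp: U_def)
    \<comment> \<open>C and D meet inside the proper subset D \<inter> U of D, and s lies there but not in C.\<close>
    have "card (D \<inter> U) < j"
      using D card_A psubset_card_mono[of D "D \<inter> U"] by auto
    moreover have "s \<in> D \<inter> U" "finite (D \<inter> U)"
      using s \<open>A \<inter> B \<subseteq> D\<close> \<open>finite U\<close> by (auto simp: U_def)
    moreover have "C \<inter> D \<subseteq> D \<inter> U - {s}"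
      using \<open>C \<subseteq> U\<close> s by blast
    ultimately have "card (C \<inter> D) < j - 1"
      using card_mono[of "D \<inter> U - {s}" "C \<inter> D"] card_gt_0_iff[of "D \<inter> U"]
      by (auto simp: card_Diff_singleton)
    moreover have "card (C \<inter> D) = j - 1"
      using near that D \<open>C \<noteq> D\<close> by blast
    ultimately show False
      by simp
  qed
  then show ?thesis
    using \<open>finite (A \<inter> B)\<close> card_S by blast
qed

lemma finite_cliques: "finite V \<Longrightarrow> finite (cliques V E k)"
  by (rule finite_subset[of _ "Pow V"]) (auto simp: cliques_def is_clique_def)

lemma finite_clique: "finite V \<Longrightarrow> K \<in> cliques V E k \<Longrightarrow> finite K"
  using finite_subset by (auto simp: cliques_def is_clique_def)

lemma card_Int_TS_edge:
  assumes "finite V" "TS_edge V E j A B"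
  shows "card (A \<inter> B) = j - 1"
proof -
  obtain u where "A - B = {u}" "A \<in> cliques V E j"
    using assms(2) by (auto simp: TS_edge_def)
  moreover have "finite A"
    using assms(1) calculation(2) by (rule finite_clique)
  ultimately have "card A - card (A \<inter> B) = 1" "card A = j"
    using card_Diff_subset_Int[of A B] by (auto simp: cliques_def)
  then show ?thesis
    by linarith
qed

lemma johnson_clique_TS_clique:
  assumes "finite V" "is_clique (cliques V E j) (TS_edge V E j) F"
  shows "johnson_clique j F"
proof -
  have petals: "F \<subseteq> cliques V E j" and edges: "\<forall>A\<in>F. \<forall>B\<in>F. A \<noteq> B \<longrightarrow> TS_edge V E j A B"
    using assms(2) by (auto simp: is_clique_def)
  show ?thesis
    unfolding johnson_clique_def
  proof (intro conjI ballI impI)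
    fix A assume "A \<in> F"
    then have "A \<in> cliques V E j"
      using petals by blast
    then show "finite A" "card A = j"
      by (simp_all add: finite_clique[OF assms(1)]) (simp add: cliques_def)
  next
    fix A B assume "A \<in> F" "B \<in> F" "A \<noteq> B"
    then have "TS_edge V E j A B"
      using edges by blast
    then show "card (A \<inter> B) = j - 1"
      by (rule card_Int_TS_edge[OF assms(1)])
  qed
qed

lemma is_clique_TS_sunflower_iff:
  assumes "S \<inter> X = {}" "X \<noteq> {}" "finite S" "card S = j - 1" "j \<ge> 1"
  shows "is_clique (cliques V E j) (TS_edge V E j) (sunflower S X) \<longleftrightarrow> is_clique V E (S \<union> X)"
proof
  assume TS_clique: "is_clique (cliques V E j) (TS_edge V E j) (sunflower S X)"
  then have "sunflower S X \<subseteq> cliques V E j"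
    by (simp add: is_clique_def)
  then have petal: "is_clique V E (insert x S)" if "x \<in> X" for x
    using that unfolding sunflower_def cliques_def by blast
  have edge: "E u v" if "u \<in> X" "v \<in> X" "u \<noteq> v" for u v
  proof -
    have "insert u S \<noteq> insert v S"
      using that assms(1) by blast
    then have "TS_edge V E j (insert u S) (insert v S)"
      using TS_clique that by (simp add: is_clique_def sunflower_def)
    moreover have "insert u S - insert v S = {u}" "insert v S - insert u S = {v}"
      using that assms(1) by auto
    ultimately show ?thesis
      by (auto simp: TS_edge_def)
  qed
  obtain x where "x \<in> X"
    using assms(2) by blast
  show "is_clique V E (S \<union> X)"
    unfolding is_clique_def
  proof (intro conjI ballI impI)
    show "S \<union> X \<subseteq> V"
      using petal \<open>x \<in> X\<close> by (fastforce simp: is_clique_def)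
    fix u v assume "u \<in> S \<union> X" "v \<in> S \<union> X" "u \<noteq> v"
    then consider "u \<in> X" "v \<in> X" | y where "y \<in> X" "u \<in> insert y S" "v \<in> insert y S"
      using \<open>x \<in> X\<close> by blast
    then show "E u v"
      using edge petal \<open>u \<noteq> v\<close> by cases (auto simp: is_clique_def)
  qed
next
  assume K_clique: "is_clique V E (S \<union> X)"
  have petal: "insert x S \<in> cliques V E j" if "x \<in> X" for x
  proof -
    have "x \<notin> S"
      using that assms(1) by blast
    then show ?thesis
      using K_clique that assms(3-5) by (auto simp: cliques_def is_clique_def)
  qed
  show "is_clique (cliques V E j) (TS_edge V E j) (sunflower S X)"
    unfolding is_clique_def
  proof (intro conjI ballI impI)
    show "sunflower S X \<subseteq> cliques V E j"
      using petal by (auto simp: sunflower_def)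
    fix A B assume "A \<in> sunflower S X" "B \<in> sunflower S X" "A \<noteq> B"
    then obtain x y where "x \<in> X" "y \<in> X" "x \<noteq> y" "A = insert x S" "B = insert y S"
      by (auto simp: sunflower_def)
    then show "TS_edge V E j A B"
      using petal K_clique assms(1) unfolding TS_edge_def is_clique_def by blast
  qed
qed

lemma sunflower_in_TS_cliques:
  assumes "finite V" "K \<in> cliques V E k" "S \<subseteq> K" "S \<noteq> K" "card S = j - 1" "j \<ge> 1"
  shows "sunflower S (K - S) \<in> cliques (cliques V E j) (TS_edge V E j) (k - (j - 1))"
proof -
  have "finite K" "is_clique V E K" "card K = k"
    using assms(1,2) finite_clique by (auto simp: cliques_def)
  moreover have "finite S"
    using \<open>finite K\<close> assms(3) finite_subset by blast
  ultimately have "is_clique (cliques V E j) (TS_edge V E j) (sunflower S (K - S))"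
    using is_clique_TS_sunflower_iff[of S "K - S" j V E] assms(3-6) by (simp add: Un_absorb1)
  moreover have "card (sunflower S (K - S)) = k - (j - 1)"
    using \<open>finite K\<close> \<open>finite S\<close> \<open>card K = k\<close> assms(3,5) by (simp add: card_sunflower card_Diff_subset)
  ultimately show ?thesis
    by (simp add: cliques_def)
qed

lemma TS_clique_eq_sunflower:
  assumes "finite V" "j \<ge> 1" "q \<ge> j + 2" "F \<in> cliques (cliques V E j) (TS_edge V E j) q"
  obtains K S where "K \<in> cliques V E (q + j - 1)" "S \<subseteq> K" "card S = j - 1" "F = sunflower S (K - S)"
proof -
  have TS_clique: "is_clique (cliques V E j) (TS_edge V E j) F" and "card F = q"
    using assms(4) by (auto simp: cliques_def)
  have F: "johnson_clique j F"
    using assms(1) TS_clique by (rule johnson_clique_TS_clique)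
  then obtain S where S: "finite S" "card S = j - 1" "\<forall>A\<in>F. S \<subseteq> A"
    using johnson_clique_common_kernel \<open>card F = q\<close> assms(3) by metis
  define X where "X = \<Union>F - S"
  have F_eq: "F = sunflower S X"
    unfolding X_def using S F assms(2) by (intro eq_sunflower_Union) (auto simp: johnson_clique_def)
  have "S \<inter> X = {}" "F \<noteq> {}"
    using \<open>card F = q\<close> assms(3) by (auto simp: X_def)
  then have "X \<noteq> {}" "card X = q"
    using F_eq card_sunflower[of S X] \<open>card F = q\<close> by (auto simp: sunflower_def)
  have "finite X"
    using \<open>card X = q\<close> assms(3) card.infinite by force
  have "is_clique V E (S \<union> X)"
    using is_clique_TS_sunflower_iff[of S X j V E] TS_clique F_eq S \<open>S \<inter> X = {}\<close> \<open>X \<noteq> {}\<close> assms(2)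
    by simp
  moreover have "card (S \<union> X) = q + j - 1"
    using S \<open>finite X\<close> \<open>card X = q\<close> \<open>S \<inter> X = {}\<close> assms(2) by (simp add: card_Un_disjoint)
  moreover have "F = sunflower S (S \<union> X - S)"
    using F_eq \<open>S \<inter> X = {}\<close> by (simp add: Un_Diff Diff_triv Int_commute)
  ultimately show ?thesis
    using S by (intro that[of "S \<union> X" S]) (auto simp: cliques_def)
qed

lemma bij_betw_sunflower_TS_cliques:
  assumes "finite V" "j \<ge> 1" "q \<ge> j + 2"
  shows "bij_betw (\<lambda>(K, S). sunflower S (K - S))
           (SIGMA K:cliques V E (q + j - 1). {S. S \<subseteq> K \<and> card S = j - 1})
           (cliques (cliques V E j) (TS_edge V E j) q)"
    (is "bij_betw ?\<Phi> ?D ?T")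
proof (rule bij_betw_imageI)
  have card_Diff: "card (K - S) = q" if "(K, S) \<in> ?D" for K S
  proof -
    have K: "K \<in> cliques V E (q + j - 1)" and "S \<subseteq> K" "card S = j - 1"
      using that by auto
    moreover have "finite K"
      using assms(1) K by (rule finite_clique)
    ultimately have "finite S"
      using finite_subset by blast
    then show ?thesis
      using K \<open>S \<subseteq> K\<close> \<open>card S = j - 1\<close> assms(2) by (simp add: card_Diff_subset cliques_def)
  qed
  show "inj_on ?\<Phi> ?D"
  proof (rule inj_on_inverseI[where g = "\<lambda>F. (\<Union>F, \<Inter>F)"])
    fix P assume "P \<in> ?D"
    then show "(\<Union> (?\<Phi> P), \<Inter> (?\<Phi> P)) = P"
      using card_Diff assms(3) by (cases P) (simp add: Union_Inter_sunflower_Diff)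
  qed
  show "?\<Phi> ` ?D = ?T"
  proof (intro equalityI subsetI)
    fix F assume "F \<in> ?\<Phi> ` ?D"
    then obtain K S where D: "(K, S) \<in> ?D" and F: "F = sunflower S (K - S)"
      by blast
    have "S \<noteq> K"
      using card_Diff[OF D] assms(3) by auto
    then have "F \<in> cliques (cliques V E j) (TS_edge V E j) (q + j - 1 - (j - 1))"
      unfolding F using D assms(1,2) by (intro sunflower_in_TS_cliques) auto
    then show "F \<in> ?T"
      using assms(2) by simp
  next
    fix F assume "F \<in> ?T"
    then obtain K S where "K \<in> cliques V E (q + j - 1)" "S \<subseteq> K" "card S = j - 1" "F = sunflower S (K - S)"
      using assms by (metis TS_clique_eq_sunflower)
    then show "F \<in> ?\<Phi> ` ?D"
      by (intro image_eqI[where x = "(K, S)"]) auto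
  qed
qed

lemma card_TS_cliques:
  assumes "finite V" "j \<ge> 1" "q \<ge> j + 2"
  shows "card (cliques (cliques V E j) (TS_edge V E j) q)
           = ((q + j - 1) choose (j - 1)) * card (cliques V E (q + j - 1))"
proof -
  have "card (cliques (cliques V E j) (TS_edge V E j) q)
          = card (SIGMA K:cliques V E (q + j - 1). {S. S \<subseteq> K \<and> card S = j - 1})"
    using bij_betw_same_card[OF bij_betw_sunflower_TS_cliques[OF assms]] by simp
  also have "\<dots> = (\<Sum>K\<in>cliques V E (q + j - 1). card {S. S \<subseteq> K \<and> card S = j - 1})"
    using finite_cliques[OF assms(1)] finite_clique[OF assms(1)] by (intro card_SigmaI) auto
  also have "\<dots> = (\<Sum>K\<in>cliques V E (q + j - 1). (q + j - 1) choose (j - 1))"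
    using finite_clique[OF assms(1)] by (intro sum.cong) (auto simp: n_subsets cliques_def)
  finally show ?thesis
    by simp
qed

lemma bij_betw_image_cliques:
  assumes bij: "bij_betw f V1 V2" and edges: "\<forall>u\<in>V1. \<forall>v\<in>V1. E1 u v \<longleftrightarrow> E2 (f u) (f v)"
  shows "bij_betw (image f) (cliques V1 E1 k) (cliques V2 E2 k)"
proof -
  have Pow: "bij_betw (image f) (Pow V1) (Pow V2)"
    using bij by (rule bij_betw_Pow)
  have clique_image: "f ` K \<in> cliques V2 E2 k \<longleftrightarrow> K \<in> cliques V1 E1 k" if "K \<subseteq> V1" for K
  proof -
    have "inj_on f K"
      using bij that bij_betw_imp_inj_on inj_on_subset by blast
    moreover have "f ` K \<subseteq> V2"
      using bij that bij_betw_imp_surj_on by blast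
    moreover have "(\<forall>u\<in>f ` K. \<forall>v\<in>f ` K. u \<noteq> v \<longrightarrow> E2 u v) \<longleftrightarrow> (\<forall>u\<in>K. \<forall>v\<in>K. u \<noteq> v \<longrightarrow> E1 u v)"
      using \<open>inj_on f K\<close> that edges by (auto simp: inj_on_eq_iff subset_iff)
    ultimately show ?thesis
      using that by (simp add: cliques_def is_clique_def card_image)
  qed
  have "image f ` cliques V1 E1 k = cliques V2 E2 k"
  proof (intro equalityI subsetI)
    fix L assume "L \<in> image f ` cliques V1 E1 k"
    then obtain K where "K \<in> cliques V1 E1 k" "L = f ` K"
      by blast
    moreover have "K \<subseteq> V1"
      using calculation(1) by (simp add: cliques_def is_clique_def)
    ultimately show "L \<in> cliques V2 E2 k"
      using clique_image by blast
  next
    fix L assume L: "L \<in> cliques V2 E2 k"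
    then have "L \<in> image f ` Pow V1"
      using bij_betw_imp_surj_on[OF Pow] by (auto simp: cliques_def is_clique_def)
    then show "L \<in> image f ` cliques V1 E1 k"
      using clique_image L by auto
  qed
  moreover have "cliques V1 E1 k \<subseteq> Pow V1"
    by (auto simp: cliques_def is_clique_def)
  ultimately show ?thesis
    using bij_betw_subset[OF Pow] by metis
qed

lemma graph_iso_card_cliques:
  assumes "graph_iso V1 E1 V2 E2"
  shows "card (cliques V1 E1 k) = card (cliques V2 E2 k)"
proof -
  obtain f where "bij_betw f V1 V2" "\<forall>u\<in>V1. \<forall>v\<in>V1. E1 u v \<longleftrightarrow> E2 (f u) (f v)"
    using assms unfolding graph_iso_def by blast
  then show ?thesis
    by (rule bij_betw_same_card[OF bij_betw_image_cliques])
qed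

theorem proposition3p10:
  fixes VH :: "'a set" and EH :: "'a \<Rightarrow> 'a \<Rightarrow> bool"
    and VG :: "'b set" and EG :: "'b \<Rightarrow> 'b \<Rightarrow> bool"
    and j q :: nat
  assumes "j \<ge> 2"
    and "simple_graph VH EH"
    and "simple_graph VG EG"
    and "graph_iso VG EG (TS_vertices VH EH j) (TS_edge VH EH j)"
    and "q = clique_number VG EG"
    and "q \<ge> j + 2"
  shows "card (cliques VG EG q) = ((q + j - 1) choose (j - 1)) * card (cliques VH EH (q + j - 1))
         \<and> ((q + j - 1) choose (j - 1)) dvd card (cliques VG EG q)"
proof -
  have "finite VH"
    using assms(2) by (simp add: simple_graph_def)
  have "card (cliques VG EG q) = card (cliques (cliques VH EH j) (TS_edge VH EH j) q)"
    using graph_iso_card_cliques[OF assms(4)] by (simp add: TS_vertices_def)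
  also have "\<dots> = ((q + j - 1) choose (j - 1)) * card (cliques VH EH (q + j - 1))"
    using \<open>finite VH\<close> assms(1,6) by (intro card_TS_cliques) auto
  finally show ?thesis
    by simp
qed

end
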